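(* Let $H$ be a separable infinite-dimensional complex Hilbert space and $T\in\mathcal{L}(H)$. (i) If $S\in\mathcal{L}(H)$ commutes with $T$, then $(T,ST)$ is not a universal commuting pair. In particular, $(T,p(T)T)$ is not a universal commuting pair for any complex polynomial $p(z)=a_1z+\dots+a_nz^n$ with $p(0)=0$, where $p(T)=a_1T+\dots+a_nT^n$. (ii) $(T^m,T^n)$ is not a universal commuting pair for any $m,n\in\mathbb{N}$.
   Context: A commuting pair $(U_1,U_2)\in\mathcal{L}(H)^2$ is a universal commuting pair if for every commuting pair $(S_1,S_2)\in\mathcal{L}(H)^2$ there exist a constant $c\neq0$, a closed subspace $M\subset H$ invariant under both $U_1$ and $U_2$, and a linear isomorphism $V:H\to M$ such that $U_1V=cVS_1$ and $U_2V=cVS_2$. *)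

theory Defs
  imports "HOL-Analysis.Analysis"
begin

text \<open>A complex Hilbert space is modelled as a real Hilbert space 'h
(class real_inner + complete_space) together with an orthogonal complex
structure J (multiplication by the imaginary unit): J is bounded real-linear,
J (J x) = - x and J preserves the real inner product. The complex scalar
multiplication is (a + i b) x = a x + b J x; the complex inner product is
inner x y + i inner x (J y) (up to convention).\<close>

definition complex_structure :: "('h::{real_inner,complete_space} \<Rightarrow>\<^sub>L 'h) \<Rightarrow> bool" where
  "complex_structure J \<longleftrightarrow>
     (\<forall>x. blinfun_apply J (blinfun_apply J x) = - x) \<and> (\<forall>x y. inner (blinfun_apply J x) (blinfun_apply J y) = inner x y)"

definition cscale :: "('h::{real_inner,complete_space} \<Rightarrow>\<^sub>L 'h) \<Rightarrow> complex \<Rightarrow> 'h \<Rightarrow> 'h" where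
  "cscale J c x = Re c *\<^sub>R x + Im c *\<^sub>R blinfun_apply J x"

definition cscale_op :: "('h::{real_inner,complete_space} \<Rightarrow>\<^sub>L 'h) \<Rightarrow> complex \<Rightarrow> ('h \<Rightarrow>\<^sub>L 'h) \<Rightarrow> ('h \<Rightarrow>\<^sub>L 'h)" where
  "cscale_op J c T = Re c *\<^sub>R T + Im c *\<^sub>R (J o\<^sub>L T)"

definition separable_space :: "'h::metric_space itself \<Rightarrow> bool" where
  "separable_space _ \<longleftrightarrow> (\<exists>D::'h set. countable D \<and> closure D = UNIV)"

definition infinite_dimensional :: "'h::real_vector itself \<Rightarrow> bool" where
  "infinite_dimensional _ \<longleftrightarrow> \<not> (\<exists>B::'h set. finite B \<and> span B = UNIV)"

text \<open>L(H): bounded complex-linear operators = bounded real-linear operators commuting with J\<close>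
definition Lops :: "('h::{real_inner,complete_space} \<Rightarrow>\<^sub>L 'h) \<Rightarrow> ('h \<Rightarrow>\<^sub>L 'h) set" where
  "Lops J = {T. \<forall>x. blinfun_apply T (blinfun_apply J x) = blinfun_apply J (blinfun_apply T x)}"

definition csubspace :: "('h::{real_inner,complete_space} \<Rightarrow>\<^sub>L 'h) \<Rightarrow> 'h set \<Rightarrow> bool" where
  "csubspace J M \<longleftrightarrow> subspace M \<and> (\<forall>x\<in>M. blinfun_apply J x \<in> M)"

definition commuting_pair :: "('h::{real_inner,complete_space} \<Rightarrow>\<^sub>L 'h) \<Rightarrow> ('h \<Rightarrow>\<^sub>L 'h) \<Rightarrow> ('h \<Rightarrow>\<^sub>L 'h) \<Rightarrow> bool" where
  "commuting_pair J S1 S2 \<longleftrightarrow> S1 \<in> Lops J \<and> S2 \<in> Lops J \<and> S1 o\<^sub>L S2 = S2 o\<^sub>L S1"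

text \<open>A linear isomorphism V : H \<rightarrow> M is a bounded
complex-linear operator on H, injective, with range exactly M (its inverse
M \<rightarrow> H is then automatically bounded, M being closed).\<close>
definition universal_commuting_pair :: "('h::{real_inner,complete_space} \<Rightarrow>\<^sub>L 'h) \<Rightarrow> ('h \<Rightarrow>\<^sub>L 'h) \<Rightarrow> ('h \<Rightarrow>\<^sub>L 'h) \<Rightarrow> bool" where
  "universal_commuting_pair J U1 U2 \<longleftrightarrow>
     commuting_pair J U1 U2 \<and>
     (\<forall>S1 S2. commuting_pair J S1 S2 \<longrightarrow>
        (\<exists>(c::complex) (M::'h set) V.
            c \<noteq> 0 \<and> closed M \<and> csubspace J M \<and>
            (\<forall>x\<in>M. blinfun_apply U1 x \<in> M) \<and> (\<forall>x\<in>M. blinfun_apply U2 x \<in> M) \<and>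
            V \<in> Lops J \<and> inj (blinfun_apply V) \<and> range (blinfun_apply V) = M \<and>
            U1 o\<^sub>L V = cscale_op J c (V o\<^sub>L S1) \<and>
            U2 o\<^sub>L V = cscale_op J c (V o\<^sub>L S2)))"

definition opow :: "('h::real_normed_vector \<Rightarrow>\<^sub>L 'h) \<Rightarrow> nat \<Rightarrow> ('h \<Rightarrow>\<^sub>L 'h)" where
  "opow T k = ((\<lambda>S. T o\<^sub>L S) ^^ k) id_blinfun"

end

theory Submission
  imports Defs
begin

text \<open>Every pair of the form (U, X U) or (X U, U) fails to model the commuting pair (0, I):
an intertwiner V would satisfy U V = 0, hence c V = X U V = 0, so V = 0, which is not
injective on a nonzero space. Both pairs of the theorem have this form, the second one
because T^n = T^(n-m) T^m for m \<le> n.\<close>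

lemma blinfun_compose_assoc: "(A o\<^sub>L B) o\<^sub>L C = A o\<^sub>L (B o\<^sub>L C)"
  by (rule blinfun_eqI) simp

lemma blinfun_compose_id_left: "id_blinfun o\<^sub>L A = A"
  by (rule blinfun_eqI) simp

lemma blinfun_compose_id_right: "A o\<^sub>L id_blinfun = A"
  by (rule blinfun_eqI) simp

lemma opow_add: "opow T (a + b) = opow T a o\<^sub>L opow T b"
  by (induction a) (simp_all add: opow_def blinfun_compose_id_left blinfun_compose_assoc)

lemma opow_factor: "m \<le> n \<Longrightarrow> opow T n = opow T (n - m) o\<^sub>L opow T m"
  by (metis opow_add le_add_diff_inverse2)

lemma cscale_eq_0:
  assumes J: "complex_structure J" and "c \<noteq> 0" and "cscale J c y = 0"
  shows "y = 0"
proof -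
  let ?a = "Re c" and ?b = "Im c" and ?Jy = "blinfun_apply J y"
  have sum: "?a *\<^sub>R y + ?b *\<^sub>R ?Jy = 0"
    using assms(3) unfolding cscale_def .
  have "blinfun_apply J (?a *\<^sub>R y + ?b *\<^sub>R ?Jy) = 0"
    using sum by simp
  then have rotated: "?a *\<^sub>R ?Jy - ?b *\<^sub>R y = 0"
    using J by (simp add: complex_structure_def blinfun.add_right blinfun.scaleR_right)
  have "?a *\<^sub>R (?a *\<^sub>R y + ?b *\<^sub>R ?Jy) - ?b *\<^sub>R (?a *\<^sub>R ?Jy - ?b *\<^sub>R y) = 0"
    using sum rotated by simp
  then have "(?a * ?a + ?b * ?b) *\<^sub>R y = 0"
    by (simp add: algebra_simps)
  moreover have "?a * ?a + ?b * ?b \<noteq> 0"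
    using \<open>c \<noteq> 0\<close> by (metis complex_eq_0 power2_eq_square)
  ultimately show ?thesis
    by auto
qed

lemma cscale_op_eq_0:
  assumes "complex_structure J" and "c \<noteq> 0" and "cscale_op J c V = 0"
  shows "V = 0"
proof (rule blinfun_eqI)
  fix x
  have "cscale J c (blinfun_apply V x) = blinfun_apply (cscale_op J c V) x"
    by (simp add: cscale_def cscale_op_def plus_blinfun.rep_eq scaleR_blinfun.rep_eq)
  with assms show "blinfun_apply V x = blinfun_apply 0 x"
    using cscale_eq_0 by simp
qed

lemma commuting_pair_zero_id: "commuting_pair J 0 id_blinfun"
  and commuting_pair_id_zero: "commuting_pair J id_blinfun 0"
  by (simp_all add: commuting_pair_def Lops_def blinfun.zero_right)

lemma intertwiner_of_zero_id_eq_0: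
  assumes "complex_structure J" and "c \<noteq> 0"
    and "U o\<^sub>L V = cscale_op J c (V o\<^sub>L 0)"
    and "(X o\<^sub>L U) o\<^sub>L V = cscale_op J c (V o\<^sub>L id_blinfun)"
  shows "V = 0"
proof -
  have "U o\<^sub>L V = 0"
    using assms(3) by (simp add: cscale_op_def)
  then have "(X o\<^sub>L U) o\<^sub>L V = 0"
    by (simp add: blinfun_compose_assoc)
  then have "cscale_op J c V = 0"
    using assms(4) by (simp add: blinfun_compose_id_right)
  with assms(1,2) show ?thesis
    by (rule cscale_op_eq_0)
qed

lemma not_universal_commuting_pair_compose:
  fixes U X :: "'h::{real_inner,complete_space} \<Rightarrow>\<^sub>L 'h"
  assumes J: "complex_structure J" and nontrivial: "(x::'h) \<noteq> 0"
  shows "\<not> universal_commuting_pair J U (X o\<^sub>L U)"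
    and "\<not> universal_commuting_pair J (X o\<^sub>L U) U"
proof -
  have no_model: False
    if "c \<noteq> 0" "inj (blinfun_apply V)"
      "U o\<^sub>L V = cscale_op J c (V o\<^sub>L 0)"
      "(X o\<^sub>L U) o\<^sub>L V = cscale_op J c (V o\<^sub>L id_blinfun)" for c V
  proof -
    have "V = 0"
      using intertwiner_of_zero_id_eq_0[OF J that(1,3,4)] .
    then have "blinfun_apply V x = blinfun_apply V 0"
      by simp
    with that(2) nontrivial show False
      by (meson injD)
  qed
  show "\<not> universal_commuting_pair J U (X o\<^sub>L U)"
    using commuting_pair_zero_id no_model unfolding universal_commuting_pair_def by blast
  show "\<not> universal_commuting_pair J (X o\<^sub>L U) U"
    using commuting_pair_id_zero no_model unfolding universal_commuting_pair_def by blast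
qed

lemma infinite_dimensional_nontrivial:
  assumes "infinite_dimensional TYPE('v)"
  obtains x :: "'v::real_vector" where "x \<noteq> 0"
  using assms unfolding infinite_dimensional_def
  by (metis finite.emptyI span_empty UNIV_eq_I singletonI)

theorem proposition4p1:
  fixes J T :: "'h::{real_inner,complete_space} \<Rightarrow>\<^sub>L 'h"
  assumes "complex_structure J"
    and "separable_space TYPE('h)"
    and "infinite_dimensional TYPE('h)"
    and "T \<in> Lops J"
  shows "(\<forall>S\<in>Lops J. S o\<^sub>L T = T o\<^sub>L S \<longrightarrow>
            \<not> universal_commuting_pair J T (S o\<^sub>L T))
       \<and> (\<forall>(a::nat \<Rightarrow> complex) (n::nat).
            \<not> universal_commuting_pair J T
                 ((\<Sum>k\<in>{1..n}. cscale_op J (a k) (opow T k)) o\<^sub>L T))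
       \<and> (\<forall>m n::nat. 1 \<le> m \<longrightarrow> 1 \<le> n \<longrightarrow>
            \<not> universal_commuting_pair J (opow T m) (opow T n))"
proof -
  obtain x :: 'h where "x \<noteq> 0"
    using assms(3) by (rule infinite_dimensional_nontrivial)
  note not_universal = not_universal_commuting_pair_compose[OF assms(1) this]
  have "\<not> universal_commuting_pair J (opow T m) (opow T n)" for m n
    using opow_factor[of m n T] opow_factor[of n m T] not_universal
    by (cases "m \<le> n") (metis, metis nat_le_linear)
  then show ?thesis
    using not_universal by blast
qed

end
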